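(* Let $(q_n)_{n \ge 1}$ be a sequence of positive rational numbers, and let $(p_n)_{n \ge 1}$ be a sequence of prime numbers such that, for every $n \in \mathbb{N}$, $p_n \mid \mathsf{d}(q_n)$ and $p_n \nmid \mathsf{d}(q_k)$ for every $k \neq n$. Then the Puiseux monoid $M = \langle q_n \mid n \in \mathbb{N} \rangle$ is a length-finite-factorization monoid (LFFM).
   Context: For a positive rational $r$ in lowest terms $n/d$, $\mathsf{d}(r) := d$. A Puiseux monoid is an additive submonoid of $(\mathbb{Q}_{\ge 0},+)$. An atom of $M$ is a nonzero element $a$ such that $a=x+y$ with $x,y\in M$ forces $x=0$ or $y=0$; $M$ is atomic if each element is a finite sum of atoms. For nonzero $x \in M$, a factorization of $x$ is a formal (unordered) sum $a_1+\dots+a_\ell$ of atoms whose value is $x$, of length $\ell$; $\mathsf{Z}(x,\ell)$ denotes the set of factorizations of $x$ of length $\ell$. $M$ is an LFFM if $M$ is atomic and $\mathsf{Z}(x,\ell)$ is finite for every nonzero $x \in M$ and every $\ell \in \mathbb{N}$. *)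

theory Defs
  imports Complex_Main "HOL-Library.Multiset" "HOL-Computational_Algebra.Primes"
begin

definition den :: "rat \<Rightarrow> nat" where
  "den r = nat (snd (quotient_of r))"

definition puiseux_monoid :: "rat set \<Rightarrow> bool" where
  "puiseux_monoid M \<longleftrightarrow> M \<subseteq> {x. x \<ge> 0} \<and> 0 \<in> M \<and> (\<forall>x\<in>M. \<forall>y\<in>M. x + y \<in> M)"

inductive_set gen_monoid :: "rat set \<Rightarrow> rat set" for Q :: "rat set" where
  zero: "0 \<in> gen_monoid Q"
| gen: "q \<in> Q \<Longrightarrow> q \<in> gen_monoid Q"
| add: "x \<in> gen_monoid Q \<Longrightarrow> y \<in> gen_monoid Q \<Longrightarrow> x + y \<in> gen_monoid Q"

definition atoms :: "rat set \<Rightarrow> rat set" where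
  "atoms M = {a \<in> M. a \<noteq> 0 \<and> (\<forall>x\<in>M. \<forall>y\<in>M. a = x + y \<longrightarrow> x = 0 \<or> y = 0)}"

text \<open>Factorizations: formal unordered sums of atoms, i.e. multisets of atoms.\<close>
definition factorizations_len :: "rat set \<Rightarrow> rat \<Rightarrow> nat \<Rightarrow> rat multiset set" where
  "factorizations_len M x l =
     {f. set_mset f \<subseteq> atoms M \<and> sum_mset f = x \<and> size f = l}"

definition atomic :: "rat set \<Rightarrow> bool" where
  "atomic M \<longleftrightarrow> (\<forall>x\<in>M. x \<noteq> 0 \<longrightarrow>
      (\<exists>f. set_mset f \<subseteq> atoms M \<and> sum_mset f = x))"

definition LFFM :: "rat set \<Rightarrow> bool" where
  "LFFM M \<longleftrightarrow> atomic M \<and>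
     (\<forall>x\<in>M. x \<noteq> 0 \<longrightarrow> (\<forall>l. finite (factorizations_len M x l)))"

end

theory Submission
  imports Defs
begin

text \<open>
  Fix \<open>n\<close> and call a rational \<open>p\<^sub>n\<close>-integral if \<open>p\<^sub>n\<close> does not divide its denominator. These
  rationals are closed under sums, differences and division by integers prime to \<open>p\<^sub>n\<close>, and every
  \<open>q\<^sub>k\<close> with \<open>k \<noteq> n\<close> is \<open>p\<^sub>n\<close>-integral while \<open>q\<^sub>n\<close> is not. Hence a sum of generators in which
  \<open>q\<^sub>n\<close> occurs \<open>c\<close> times is \<open>p\<^sub>n\<close>-integral if \<open>c = 0\<close> and is not if \<open>p\<^sub>n\<close> does not divide \<open>c\<close>.
  The first case shows that \<open>q\<^sub>n\<close> is not a sum of other generators, so the atoms are exactly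
  the \<open>q\<^sub>n\<close>. Since \<open>1 \<le> c \<le> \<ell>\<close> for an atom in a factorization of length \<open>\<ell>\<close>, the
  second shows that a factorization of \<open>x\<close> of length \<open>\<ell>\<close> only involves atoms \<open>q\<^sub>n\<close> with
  \<open>p\<^sub>n \<le> \<ell>\<close> or \<open>p\<^sub>n\<close> dividing \<open>d(x)\<close>; as \<open>n \<mapsto> p\<^sub>n\<close> is injective, these are finitely many.
\<close>

lemma den_pos: "den r > 0"
  using quotient_of_denom_pos' unfolding den_def by simp

definition p_integral :: "nat \<Rightarrow> rat \<Rightarrow> bool" where
  "p_integral p r \<longleftrightarrow> (\<exists>u v. \<not> int p dvd v \<and> r = of_int u / of_int v)"

lemma p_integral_iff_not_dvd_den: "p_integral p r \<longleftrightarrow> \<not> p dvd den r"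
proof -
  obtain a b where ab: "quotient_of r = (a, b)" by (cases "quotient_of r")
  have b_pos: "b > 0" and r_eq: "r = of_int a / of_int b" and "coprime a b"
    using quotient_of_denom_pos[OF ab] quotient_of_div[OF ab] quotient_of_coprime[OF ab] .
  have den_eq: "int (den r) = b" using ab b_pos by (simp add: den_def)
  show ?thesis
  proof
    assume "p_integral p r"
    then obtain u v where v: "\<not> int p dvd v" and r_uv: "r = of_int u / of_int v"
      unfolding p_integral_def by blast
    have "v \<noteq> 0" using v by auto
    then have "a * v = u * b"
      using r_eq r_uv b_pos by (simp add: frac_eq_eq flip: of_int_mult)
    then have "b dvd v"
      using \<open>coprime a b\<close> by (metis coprime_commute coprime_dvd_mult_right_iff dvd_triv_right)
    then show "\<not> p dvd den r"
      using v den_eq by (metis dvd_trans int_dvd_int_iff)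
  next
    assume "\<not> p dvd den r"
    then show "p_integral p r"
      unfolding p_integral_def using den_eq r_eq by (metis int_dvd_int_iff)
  qed
qed

lemma p_integral_of_int: "prime p \<Longrightarrow> p_integral p (of_int u)"
  unfolding p_integral_def by (intro exI[of _ u] exI[of _ 1]) (auto dest: prime_gt_1_nat)

lemma p_integral_add:
  assumes "prime p" "p_integral p x" "p_integral p y"
  shows "p_integral p (x + y)"
proof -
  obtain u v where v: "\<not> int p dvd v" and x: "x = of_int u / of_int v"
    using assms(2) unfolding p_integral_def by blast
  obtain u' v' where v': "\<not> int p dvd v'" and y: "y = of_int u' / of_int v'"
    using assms(3) unfolding p_integral_def by blast
  have "\<not> int p dvd v * v'"
    using v v' \<open>prime p\<close> by (simp add: prime_dvd_mult_iff)
  moreover have "v \<noteq> 0" "v' \<noteq> 0" using v v' by auto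
  then have "x + y = of_int (u * v' + u' * v) / of_int (v * v')"
    using x y by (simp add: field_simps)
  ultimately show ?thesis unfolding p_integral_def by blast
qed

lemma p_integral_uminus: "p_integral p x \<Longrightarrow> p_integral p (- x)"
  unfolding p_integral_def by (metis minus_divide_left of_int_minus)

lemma p_integral_diff:
  "prime p \<Longrightarrow> p_integral p x \<Longrightarrow> p_integral p y \<Longrightarrow> p_integral p (x - y)"
  using p_integral_add p_integral_uminus by (metis diff_conv_add_uminus)

lemma p_integral_sum_mset:
  assumes "prime p" "\<And>x. x \<in># f \<Longrightarrow> p_integral p x"
  shows "p_integral p (sum_mset f)"
  using assms(2)
  by (induction f) (simp_all add: p_integral_add p_integral_of_int[OF \<open>prime p\<close>, of 0, simplified] \<open>prime p\<close>)

lemma p_integral_of_nat_mult_cancel: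
  assumes "prime p" "p_integral p (of_nat c * a)" "\<not> p dvd c"
  shows "p_integral p a"
proof -
  obtain u v where v: "\<not> int p dvd v" and ca: "of_nat c * a = of_int u / of_int v"
    using assms(2) unfolding p_integral_def by blast
  have "c \<noteq> 0" using assms(3) by (metis dvd_0_right)
  have "\<not> int p dvd int c * v"
    using v assms(1,3) by (simp add: prime_dvd_mult_iff)
  moreover have "v \<noteq> 0" using v by auto
  then have "a = of_int u / of_int (int c * v)"
    using ca \<open>c \<noteq> 0\<close> by (simp add: field_simps)
  ultimately show ?thesis unfolding p_integral_def by blast
qed

lemma sum_mset_pos:
  fixes f :: "'a :: ordered_cancel_comm_monoid_add multiset"
  assumes "\<And>x. x \<in># f \<Longrightarrow> 0 < x" "f \<noteq> {#}"
  shows "0 < sum_mset f"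
  using assms
proof (induction f)
  case (add x f)
  then show ?case
    by (cases "f = {#}") (simp_all add: add_pos_pos)
qed simp

lemma mem_gen_monoid_iff: "x \<in> gen_monoid Q \<longleftrightarrow> (\<exists>f. set_mset f \<subseteq> Q \<and> sum_mset f = x)"
proof
  assume "x \<in> gen_monoid Q"
  then show "\<exists>f. set_mset f \<subseteq> Q \<and> sum_mset f = x"
  proof induction
    case zero
    show ?case by (intro exI[of _ "{#}"]) simp
  next
    case (gen q)
    then show ?case by (intro exI[of _ "{#q#}"]) simp
  next
    case (add x y)
    then obtain f g where "set_mset f \<subseteq> Q" "sum_mset f = x" "set_mset g \<subseteq> Q" "sum_mset g = y"
      by blast
    then show ?case by (intro exI[of _ "f + g"]) auto
  qed
next
  have "set_mset f \<subseteq> Q \<Longrightarrow> sum_mset f \<in> gen_monoid Q" for f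
    by (induction f) (simp_all add: gen_monoid.intros)
  then show "\<exists>f. set_mset f \<subseteq> Q \<and> sum_mset f = x \<Longrightarrow> x \<in> gen_monoid Q" by blast
qed

lemma puiseux_monoid_gen_monoid:
  assumes "Q \<subseteq> {x. 0 \<le> x}"
  shows "puiseux_monoid (gen_monoid Q)"
proof -
  have "x \<in> gen_monoid Q \<Longrightarrow> 0 \<le> x" for x
    by (induction rule: gen_monoid.induct) (use assms in auto)
  then show ?thesis
    unfolding puiseux_monoid_def by (auto intro: gen_monoid.intros)
qed

lemma atoms_gen_monoid_subset:
  assumes Q_pos: "Q \<subseteq> {x. 0 < x}"
  shows "atoms (gen_monoid Q) \<subseteq> Q"
proof
  fix a assume "a \<in> atoms (gen_monoid Q)"
  then have "a \<in> gen_monoid Q" "a \<noteq> 0"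
    and irreducible: "\<And>x y. x \<in> gen_monoid Q \<Longrightarrow> y \<in> gen_monoid Q \<Longrightarrow> a = x + y \<Longrightarrow> x = 0 \<or> y = 0"
    unfolding atoms_def by auto
  then obtain f where f: "set_mset f \<subseteq> Q" "sum_mset f = a"
    by (auto simp: mem_gen_monoid_iff)
  then obtain b f' where b: "f = add_mset b f'"
    using \<open>a \<noteq> 0\<close> by (metis multiset_cases sum_mset.empty)
  have "b \<in> Q" using f b by simp
  have "f' = {#}"
  proof (rule ccontr)
    assume "f' \<noteq> {#}"
    then have "0 < sum_mset f'"
      using f b Q_pos by (intro sum_mset_pos) auto
    moreover have "b \<in> gen_monoid Q" using \<open>b \<in> Q\<close> by (rule gen_monoid.gen)
    moreover have "sum_mset f' \<in> gen_monoid Q"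
      using f b by (auto simp: mem_gen_monoid_iff)
    ultimately show False
      using irreducible[of b "sum_mset f'"] \<open>b \<in> Q\<close> Q_pos f b by auto
  qed
  then show "a \<in> Q" using f b \<open>b \<in> Q\<close> by simp
qed

lemma atomic_gen_monoid:
  assumes "Q \<subseteq> atoms (gen_monoid Q)"
  shows "atomic (gen_monoid Q)"
  unfolding atomic_def using assms by (meson mem_gen_monoid_iff order_trans)

locale separating_primes =
  fixes q :: "nat \<Rightarrow> rat" and p :: "nat \<Rightarrow> nat"
  assumes q_pos: "\<And>n. q n > 0"
    and p_prime: "\<And>n. prime (p n)"
    and p_dvd: "\<And>n. p n dvd den (q n)"
    and p_ndvd: "\<And>n k. k \<noteq> n \<Longrightarrow> \<not> p n dvd den (q k)"
begin

abbreviation M :: "rat set" where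
  "M \<equiv> gen_monoid (range q)"

lemma inj_p: "inj p"
  by (rule injI) (metis p_dvd p_ndvd)

lemma p_integral_sum_mset_diff_count:
  assumes "set_mset f \<subseteq> range q"
  shows "p_integral (p n) (sum_mset f - of_nat (count f (q n)) * q n)"
proof -
  have "sum_mset f = sum_mset {#x \<in># f. x = q n#} + sum_mset {#x \<in># f. x \<noteq> q n#}"
    by (metis multiset_partition sum_mset.union)
  then have "sum_mset f - of_nat (count f (q n)) * q n = sum_mset {#x \<in># f. x \<noteq> q n#}"
    by (simp add: filter_eq_replicate_mset)
  moreover have "p_integral (p n) x" if x: "x \<in># {#x \<in># f. x \<noteq> q n#}" for x
  proof -
    obtain k where "x = q k" "k \<noteq> n" using x assms by auto
    then show ?thesis using p_ndvd by (simp add: p_integral_iff_not_dvd_den)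
  qed
  ultimately show ?thesis
    using p_integral_sum_mset[OF p_prime] by metis
qed

lemma p_dvd_den_sum_mset:
  assumes "set_mset f \<subseteq> range q" "\<not> p n dvd count f (q n)"
  shows "p n dvd den (sum_mset f)"
proof (rule ccontr)
  assume "\<not> p n dvd den (sum_mset f)"
  then have "p_integral (p n) (sum_mset f - (sum_mset f - of_nat (count f (q n)) * q n))"
    using p_integral_diff[OF p_prime] p_integral_sum_mset_diff_count[OF assms(1)]
    unfolding p_integral_iff_not_dvd_den by blast
  then have "p_integral (p n) (q n)"
    using p_integral_of_nat_mult_cancel[OF p_prime _ assms(2)] by simp
  then show False
    using p_dvd by (simp add: p_integral_iff_not_dvd_den)
qed

lemma sum_mset_eq_generator:
  assumes f: "set_mset f \<subseteq> range q" and sum_f: "sum_mset f = q n"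
  shows "f = {#q n#}"
proof -
  have "q n \<in># f"
  proof (rule ccontr)
    assume "q n \<notin># f"
    then have "p_integral (p n) (q n)"
      using p_integral_sum_mset_diff_count[OF f, of n] sum_f by (simp add: not_in_iff)
    then show False
      using p_dvd by (simp add: p_integral_iff_not_dvd_den)
  qed
  then obtain f' where f': "f = add_mset (q n) f'"
    by (metis multi_member_split)
  have "sum_mset f' = 0" using sum_f f' by simp
  then show ?thesis
    using f f' q_pos sum_mset_pos[of f'] by fastforce
qed

lemma atoms_eq: "atoms M = range q"
proof
  show "atoms M \<subseteq> range q"
    using q_pos by (intro atoms_gen_monoid_subset) auto
next
  show "range q \<subseteq> atoms M"
  proof (clarify)
    fix n
    have "x = 0 \<or> y = 0" if "x \<in> M" "y \<in> M" "q n = x + y" for x y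
    proof -
      obtain f g where f: "set_mset f \<subseteq> range q" "sum_mset f = x"
        and g: "set_mset g \<subseteq> range q" "sum_mset g = y"
        using \<open>x \<in> M\<close> \<open>y \<in> M\<close> by (auto simp: mem_gen_monoid_iff)
      have "f + g = {#q n#}"
        using f g \<open>q n = x + y\<close> by (intro sum_mset_eq_generator) auto
      then show ?thesis
        using f g by (auto simp: union_is_single)
    qed
    then show "q n \<in> atoms M"
      unfolding atoms_def using q_pos[of n] by (auto intro: gen_monoid.gen)
  qed
qed

lemma set_mset_factorization_subset:
  assumes "f \<in> factorizations_len M x l"
  shows "set_mset f \<subseteq> q ` {n. p n \<le> l \<or> p n dvd den x}"
proof
  fix z assume "z \<in># f"
  have f: "set_mset f \<subseteq> range q" "sum_mset f = x" "size f = l"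
    using assms unfolding factorizations_len_def atoms_eq by auto
  then obtain n where z: "z = q n" using \<open>z \<in># f\<close> by auto
  have "p n dvd den x" if "l < p n"
  proof -
    have "0 < count f (q n)" "count f (q n) \<le> l"
      using \<open>z \<in># f\<close> z f(3) count_le_size by auto
    then have "\<not> p n dvd count f (q n)"
      using \<open>l < p n\<close> by (meson dvd_imp_le le_trans not_le)
    then show "p n dvd den x"
      using p_dvd_den_sum_mset f by blast
  qed
  then show "z \<in> q ` {n. p n \<le> l \<or> p n dvd den x}" using z not_le by blast
qed

lemma finite_factorizations_len: "finite (factorizations_len M x l)"
proof -
  have "{n. p n \<le> l \<or> p n dvd den x} = p -` ({..l} \<union> {d. d dvd den x})" by auto
  moreover have "finite ({..l} \<union> {d. d dvd den x})"
    using den_pos[of x] by auto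
  ultimately have "finite {n. p n \<le> l \<or> p n dvd den x}"
    using finite_vimageI inj_p by metis
  then have "finite (multisets_of_size (q ` {n. p n \<le> l \<or> p n dvd den x}) l)" by auto
  moreover have "factorizations_len M x l \<subseteq> multisets_of_size (q ` {n. p n \<le> l \<or> p n dvd den x}) l"
    using set_mset_factorization_subset by (auto simp: multisets_of_size_def factorizations_len_def)
  ultimately show ?thesis by (rule finite_subset[rotated])
qed

lemma LFFM: "LFFM M"
  unfolding LFFM_def using atomic_gen_monoid atoms_eq finite_factorizations_len by simp

end

theorem proposition4p10:
  fixes q :: "nat \<Rightarrow> rat" and p :: "nat \<Rightarrow> nat"
  assumes q_pos: "\<And>n. q n > 0"
    and p_prime: "\<And>n. prime (p n)"
    and p_dvd: "\<And>n. p n dvd den (q n)"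
    and p_ndvd: "\<And>n k. k \<noteq> n \<Longrightarrow> \<not> p n dvd den (q k)"
  shows "puiseux_monoid (gen_monoid (range q)) \<and> LFFM (gen_monoid (range q))"
proof -
  interpret separating_primes q p
    using assms by unfold_locales
  have "range q \<subseteq> {x. 0 \<le> x}"
    using q_pos by (auto intro: less_imp_le)
  then show ?thesis
    using puiseux_monoid_gen_monoid LFFM by blast
qed

end
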